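(* Let $m\in\{1,2\}$, $\gamma\in(1,2]$ and $z\in[z_m,z_M]$, and set $k=k(\gamma,z)=-\frac{(1+V_6)^2}{V_6}$ and $B_k(V)=\sqrt{-kV}$. If $\bar V\in(V_1,V_6)$ and $\bar C>B_k(\bar V)$, then the solution of $\frac{dC}{dV}=\frac FG$ on $[V_1,\bar V]$ with $C(\bar V)=\bar C$ satisfies $C(V)>B_k(V)$ for all $V\in[V_1,\bar V]$. Moreover, for every $z\in[z_g,z_M]$, the solution $C(\cdot;\gamma,z,P_6)$ satisfies $C(V;\gamma,z,P_6)>B_k(V)$ for all $V\in[V_1,V_6)$.
   Context: Fix $m\in\{1,2\}$. For $z>0$ put $\lambda=1+m\gamma z$, $a_1=1+\frac{m(\gamma-1)}{2}$, $a_2=\frac{m(\gamma-1)+mz\gamma(\gamma-3)}{2}$, $a_3=\frac{mz\gamma(\gamma-1)}{2}$, $G(V,C;\gamma,z)=C^2[(m+1)V+2mz]-V(1+V)(\lambda+V)$, $F(V,C;\gamma,z)=C\{C^2[1+\frac{mz}{1+V}]-a_1(1+V)^2+a_2(1+V)-a_3\}$; ODE $\frac{dC}{dV}=\frac FG$. $V_1=-\frac2{\gamma+1}$. $z_M=(\sqrt\gamma+\sqrt2)^{-2}$, $z_m=\frac{\gamma-1}{(2\gamma-1)(\gamma+1)}$, $w(z)=\sqrt{1-2(\gamma+2)z+(\gamma-2)^2z^2}$, $V_6=\frac{-1+(\gamma-2)z-w}{2}$, $C_6=1+V_6$, $P_6=(V_6,C_6)$. $z_g$: for $\gamma\in(1,2]$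 the value of $z$ with $V_6(z)=\frac{-2(1+m\gamma z)}{\gamma+1+m(\gamma-1)}$; explicitly $z_g=\frac{\sqrt{\gamma^2+(\gamma-1)^2}-\gamma}{\gamma(\gamma-1)}$ ($m=1$), $z_g=\frac{\sqrt{(2\gamma^2-\gamma+1)^2+2\gamma(\gamma-1)[4\gamma(\gamma-1)+8/3]}-(2\gamma^2-\gamma+1)}{\gamma[4\gamma(\gamma-1)+8/3]}$ ($m=2$). For $z\in[z_m,z_M]$, $C(\cdot;\gamma,z,P_6):[V_1,V_6]\to(0,\infty)$ is the real-analytic solution of the ODE near $V_6$ with $C(V_6)=C_6$ and $C'(V_6)$ equal to the unique negative root $c_1$ of $-G_Cc^2+(F_C-G_V)c+F_V=0$ (partials at $P_6$), continued to $[V_1,V_6]$. *)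

theory Defs
  imports "HOL-Analysis.Analysis"
begin

definition lam :: "nat \<Rightarrow> real \<Rightarrow> real \<Rightarrow> real" where
  "lam m g z = 1 + real m * g * z"

definition a1 :: "nat \<Rightarrow> real \<Rightarrow> real" where
  "a1 m g = 1 + real m * (g - 1) / 2"

definition a2 :: "nat \<Rightarrow> real \<Rightarrow> real \<Rightarrow> real" where
  "a2 m g z = (real m * (g - 1) + real m * z * g * (g - 3)) / 2"

definition a3 :: "nat \<Rightarrow> real \<Rightarrow> real \<Rightarrow> real" where
  "a3 m g z = real m * z * g * (g - 1) / 2"

definition GG :: "nat \<Rightarrow> real \<Rightarrow> real \<Rightarrow> real \<Rightarrow> real \<Rightarrow> real" where
  "GG m g z V C = C\<^sup>2 * ((real m + 1) * V + 2 * real m * z) - V * (1 + V) * (lam m g z + V)"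

definition FF :: "nat \<Rightarrow> real \<Rightarrow> real \<Rightarrow> real \<Rightarrow> real \<Rightarrow> real" where
  "FF m g z V C = C * (C\<^sup>2 * (1 + real m * z / (1 + V)) - a1 m g * (1 + V)\<^sup>2
                       + a2 m g z * (1 + V) - a3 m g z)"

definition V1 :: "real \<Rightarrow> real" where
  "V1 g = - 2 / (g + 1)"

definition zM :: "real \<Rightarrow> real" where
  "zM g = 1 / (sqrt g + sqrt 2)\<^sup>2"

definition zm :: "real \<Rightarrow> real" where
  "zm g = (g - 1) / ((2 * g - 1) * (g + 1))"

definition ww :: "real \<Rightarrow> real \<Rightarrow> real" where
  "ww g z = sqrt (1 - 2 * (g + 2) * z + (g - 2)\<^sup>2 * z\<^sup>2)"

definition V6 :: "real \<Rightarrow> real \<Rightarrow> real" where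
  "V6 g z = (-1 + (g - 2) * z - ww g z) / 2"

definition C6 :: "real \<Rightarrow> real \<Rightarrow> real" where
  "C6 g z = 1 + V6 g z"

definition zg :: "nat \<Rightarrow> real \<Rightarrow> real" where
  "zg m g = (if m = 1 then (sqrt (g\<^sup>2 + (g - 1)\<^sup>2) - g) / (g * (g - 1))
     else (sqrt ((2 * g\<^sup>2 - g + 1)\<^sup>2 + 2 * g * (g - 1) * (4 * g * (g - 1) + 8 / 3))
             - (2 * g\<^sup>2 - g + 1)) / (g * (4 * g * (g - 1) + 8 / 3)))"

definition kk :: "real \<Rightarrow> real \<Rightarrow> real" where
  "kk g z = - (1 + V6 g z)\<^sup>2 / V6 g z"

definition Bk :: "real \<Rightarrow> real \<Rightarrow> real \<Rightarrow> real" where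
  "Bk g z V = sqrt (- kk g z * V)"

definition solves_ODE_on :: "nat \<Rightarrow> real \<Rightarrow> real \<Rightarrow> (real \<Rightarrow> real) \<Rightarrow> real set \<Rightarrow> bool" where
  "solves_ODE_on m g z C S \<longleftrightarrow>
     (\<forall>V\<in>S. GG m g z V (C V) \<noteq> 0 \<and>
        (C has_real_derivative (FF m g z V (C V) / GG m g z V (C V))) (at V within S))"

definition is_c1 :: "nat \<Rightarrow> real \<Rightarrow> real \<Rightarrow> real \<Rightarrow> bool" where
  "is_c1 m g z c \<longleftrightarrow> c < 0 \<and>
     (let GC = deriv (\<lambda>C. GG m g z (V6 g z) C) (C6 g z);
          GV = deriv (\<lambda>V. GG m g z V (C6 g z)) (V6 g z);
          FC = deriv (\<lambda>C. FF m g z (V6 g z) C) (C6 g z);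
          FV = deriv (\<lambda>V. FF m g z V (C6 g z)) (V6 g z)
      in - GC * c\<^sup>2 + (FC - GV) * c + FV = 0)"

definition analytic_left_at :: "(real \<Rightarrow> real) \<Rightarrow> real \<Rightarrow> bool" where
  "analytic_left_at C x0 \<longleftrightarrow>
     (\<exists>\<delta>>0. \<exists>a :: nat \<Rightarrow> real. \<forall>V\<in>{x0 - \<delta>..x0}. (\<lambda>n. a n * (V - x0) ^ n) sums C V)"

definition is_P6_solution :: "nat \<Rightarrow> real \<Rightarrow> real \<Rightarrow> (real \<Rightarrow> real) \<Rightarrow> bool" where
  "is_P6_solution m g z C \<longleftrightarrow>
     (\<forall>V\<in>{V1 g..V6 g z}. C V > 0) \<and>
     C (V6 g z) = C6 g z \<and>
     analytic_left_at C (V6 g z) \<and>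
     (\<exists>c. is_c1 m g z c \<and> (C has_real_derivative c) (at (V6 g z) within {V1 g..V6 g z})) \<and>
     continuous_on {V1 g..V6 g z} C \<and>
     solves_ODE_on m g z C {V1 g..<V6 g z}"

end

theory Submission
  imports Defs
begin

text \<open>
  Along the barrier \<open>C = B(V) = sqrt (-k V)\<close> the ODE field is strictly flatter than the
  barrier: \<open>F/G < B'\<close> on \<open>[V\<^sub>1, V\<^sub>6)\<close>. Eliminating \<open>z\<close> by the quadratic equation
  defining \<open>V\<^sub>6\<close> and \<open>k\<close> by \<open>k V\<^sub>6 = -(1 + V\<^sub>6)\<^sup>2\<close>, the sign of \<open>F/G - B'\<close> becomes the sign of
  a quadratic polynomial in \<open>V\<close>, whose negativity reduces to polynomial certificates with
  nonnegative coefficients in \<open>\<gamma> - 1\<close>, \<open>(\<gamma> + 1) V\<^sub>6 + 2\<close> and \<open>-(\<gamma> + 1)(2 V\<^sub>6 + 1)\<close>.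
  Hence a solution above the barrier at \<open>V\<close> stays above it to the left of \<open>V\<close>: at the largest
  point where it touches the barrier it would have to cross it downwards.
  The \<open>P\<^sub>6\<close> solution starts on the barrier, \<open>C(V\<^sub>6) = 1 + V\<^sub>6 = B(V\<^sub>6)\<close>, but its slope
  \<open>c\<^sub>1\<close> is smaller than \<open>B'(V\<^sub>6)\<close>, so it lies above the barrier just left of \<open>V\<^sub>6\<close> and the
  first part applies.
\<close>

lemma pos_on_Icc_if_downcrossing_zeros:
  fixes f :: "real \<Rightarrow> real"
  assumes cont: "continuous_on {a..b} f" and pos_b: "0 < f b"
    and down: "\<And>x. x \<in> {a..b} \<Longrightarrow> f x = 0 \<Longrightarrow> \<exists>f'<0. (f has_real_derivative f') (at x within {a..b})"
  shows "\<forall>x\<in>{a..b}. 0 < f x"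
proof (rule ccontr)
  define T where "T = {a..b} \<inter> f -` {..0}"
  assume "\<not> (\<forall>x\<in>{a..b}. 0 < f x)"
  then have "T \<noteq> {}" unfolding T_def by force
  moreover have bdd: "bdd_above T" unfolding T_def by (meson bdd_above_Icc bdd_above_mono inf_le1)
  moreover have "closed T"
    unfolding T_def using cont by (intro continuous_closed_preimage) auto
  ultimately have "Sup T \<in> T" by (rule closed_contains_Sup)
  define v where "v = Sup T"
  have v: "v \<in> {a..b}" "f v \<le> 0" using \<open>Sup T \<in> T\<close> unfolding v_def T_def by auto
  have upper: "x \<le> v" if "x \<in> T" for x unfolding v_def using that bdd by (rule cSup_upper)
  have "v < b" using v pos_b by (cases "v = b") auto
  moreover have "continuous_on {v..b} f" using v by (auto intro: continuous_on_subset[OF cont])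
  ultimately obtain x where x: "v \<le> x" "x \<le> b" "f x = 0"
    using IVT'[of f v 0 b] v pos_b by auto
  then have "x \<in> T" using v unfolding T_def by auto
  with x have "f v = 0" using upper by force
  then obtain f' where "f' < 0" and "(f has_real_derivative f') (at v within {a..b})"
    using down v by blast
  then obtain d where d: "0 < d" "\<And>h. 0 < h \<Longrightarrow> v + h \<in> {a..b} \<Longrightarrow> h < d \<Longrightarrow> f (v + h) < f v"
    using has_real_derivative_neg_dec_right by metis
  define h where "h = min (d / 2) (b - v)"
  have "0 < h" "v + h \<in> {a..b}" "h < d" using d \<open>v < b\<close> v unfolding h_def by auto
  then have "v + h \<in> T" using d(2) \<open>f v = 0\<close> unfolding T_def by fastforce
  then show False using upper \<open>0 < h\<close> by fastforce
qed

lemma neg_root_lt: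
  fixes a b c0 c t :: real
  assumes "0 < a" and "c0 \<le> 0" and "c < 0" and "t < 0"
    and root: "a * c\<^sup>2 + b * c + c0 = 0" and neg_t: "a * t\<^sup>2 + b * t + c0 < 0"
  shows "c < t"
proof (rule ccontr)
  assume "\<not> c < t"
  then have "0 \<le> (t - c) * c0 + a * (c * t) * (c - t)"
    using assms by (simp add: mult_nonpos_nonpos mult_nonneg_nonneg)
  moreover have "0 < c * (a * t\<^sup>2 + b * t + c0)" using \<open>c < 0\<close> neg_t by (simp add: mult_neg_neg)
  moreover have "t * (a * c\<^sup>2 + b * c + c0)
      = c * (a * t\<^sup>2 + b * t + c0) + (t - c) * c0 + a * (c * t) * (c - t)"
    by algebra
  ultimately show False using root by simp
qed

lemma V1_mult_eq: "g \<noteq> -1 \<Longrightarrow> (g + 1) * V1 g = -2"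
  by (simp add: V1_def field_simps)

lemma V1_gt_minus_1: "1 < g \<Longrightarrow> -1 < V1 g"
  by (simp add: V1_def field_simps)

text \<open>
  The polynomials produced by eliminating \<open>z\<close> and \<open>k\<close>; \<open>s\<close> stands for \<open>V\<^sub>6\<close>.
  By \<open>slope_gap_on_barrier\<close>, \<open>gap_poly\<close> controls the sign of \<open>F/G - B'\<close> on the barrier,
  and by \<open>FF_V_at_P6\<close>, \<open>FV_poly\<close> that of \<open>F\<^sub>V(P\<^sub>6)\<close>.
\<close>

definition gap_coeff0 :: "real \<Rightarrow> real \<Rightarrow> real \<Rightarrow> real" where
  "gap_coeff0 m g s = m * g * s^2 + m * g * s + 2 * m * s^3 + 6 * m * s^2 + 6 * m * s + 2 * m
     + g * s - 2 * s - 2"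

definition gap_coeff1 :: "real \<Rightarrow> real \<Rightarrow> real \<Rightarrow> real" where
  "gap_coeff1 m g s = - m * g^2 * s^2 + 4 * m * g * s^2 + 3 * m * g * s + 2 * m * s + 2 * m
     - g * s^2 + g * s + 2 * s^2 - 2"

definition gap_coeff2 :: "real \<Rightarrow> real \<Rightarrow> real \<Rightarrow> real" where
  "gap_coeff2 m g s = - m * g^2 * s^2 + 3 * m * g * s^2 + 2 * m * g * s - 2 * m * s^2 - 2 * m * s
     - g * s^2 + 2 * s^2 + 2 * s"

definition gap_poly :: "real \<Rightarrow> real \<Rightarrow> real \<Rightarrow> real \<Rightarrow> real" where
  "gap_poly m g s V = gap_coeff2 m g s * V^2 + gap_coeff1 m g s * V + gap_coeff0 m g s"

definition FV_poly :: "real \<Rightarrow> real \<Rightarrow> real \<Rightarrow> real" where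
  "FV_poly m g s = m * g^2 * s^2 / 2 - 3 * m * g * s^2 / 2 - 2 * m * g * s - m * g + 3 * m * s^2
     + 4 * m * s + m + 2 * g * s^2 + 2 * g * s - 4 * s^2 - 8 * s - 4"

lemma certificate_variables_nonneg:
  fixes g s :: real
  assumes "1 < g" and "V1 g < s" and "s \<le> -1/2"
  shows "0 < g - 1" and "0 < (g + 1) * s + 2" and "0 \<le> (g + 1) * (- 2 * s - 1)"
proof -
  show "0 < g - 1" using assms(1) by simp
  have "-2 < (g + 1) * s" using assms(1,2) unfolding V1_def by (simp add: field_simps)
  then show "0 < (g + 1) * s + 2" by simp
  show "0 \<le> (g + 1) * (- 2 * s - 1)" using assms(1,3) by simp
qed

text \<open>
  Each certificate writes a multiple of the quantity as minus a polynomial with nonnegative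
  coefficients in \<open>x = \<gamma> - 1 > 0\<close>, \<open>t = (\<gamma> + 1) s + 2 > 0\<close> and \<open>r = -(\<gamma> + 1)(2 s + 1) \<ge> 0\<close>
  (positive pure powers of \<open>x\<close>, \<open>t\<close> included).
\<close>

lemma gap_poly_at_V1_neg:
  fixes m g s :: real
  assumes m: "m = 1 \<or> m = 2" and "1 < g" and "V1 g < s" and "s \<le> -1/2"
  shows "gap_poly m g s (V1 g) < 0"
proof -
  define x t r where "x = g - 1" and "t = (g + 1) * s + 2" and "r = (g + 1) * (- 2 * s - 1)"
  have xtr: "0 < x" "0 < t" "0 \<le> r"
    unfolding x_def t_def r_def using certificate_variables_nonneg assms(2-4) by auto
  have gp: "0 < g + 1" using \<open>1 < g\<close> by simp
  have scaled: "(g + 1)\<^sup>2 * gap_poly m g s (V1 g)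
      = 4 * gap_coeff2 m g s - 2 * (g + 1) * gap_coeff1 m g s + (g + 1)\<^sup>2 * gap_coeff0 m g s"
    (is "_ = ?E")
    using V1_mult_eq[of g] \<open>1 < g\<close> unfolding gap_poly_def by simp algebra
  have "64 * ((g + 1) ^ 3 * ?E) < 0"
    using m
  proof
    assume "m = 1"
    have "0 < 512 * t^6 + 3328 * x * t^5 + 8832 * x^2 * t^4 + 12352 * x^3 * t^3 +
        9664 * x^4 * t^2 + 4032 * x^5 * t + 704 * x^6 + 64 * t^2 * r^4 + 448 * t^3 * r^3 +
        1152 * t^4 * r^2 + 1280 * t^5 * r + 192 * x * t * r^4 + 1728 * x * t^2 * r^3 +
        5440 * x * t^3 * r^2 + 7168 * x * t^4 * r + 96 * x^2 * r^4 +
        1920 * x^2 * t * r^3 + 8992 * x^2 * t^2 * r^2 + 15488 * x^2 * t^3 * r +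
        608 * x^3 * r^3 + 6208 * x^3 * t * r^2 + 16288 * x^3 * t^2 * r +
        1504 * x^4 * r^2 + 8384 * x^4 * t * r + 1696 * x^5 * r" (is "0 < ?P")
      using xtr by (intro add_pos_nonneg add_nonneg_nonneg mult_pos_pos mult_nonneg_nonneg
          zero_less_power zero_le_power) auto
    moreover have "64 * ((g + 1) ^ 3 * ?E) = - ?P"
      unfolding x_def t_def r_def \<open>m = 1\<close> gap_coeff0_def gap_coeff1_def gap_coeff2_def by algebra
    ultimately show ?thesis by linarith
  next
    assume "m = 2"
    have "0 < 1024 * t^6 + 5888 * x * t^5 + 13568 * x^2 * t^4 + 16064 * x^3 * t^3 +
        10304 * x^4 * t^2 + 3392 * x^5 * t + 448 * x^6 + 128 * t^2 * r^4 +
        896 * t^3 * r^3 + 2304 * t^4 * r^2 + 2560 * t^5 * r + 352 * x * t * r^4 +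
        3168 * x * t^2 * r^3 + 9920 * x * t^3 * r^2 + 12928 * x * t^4 * r +
        128 * x^2 * r^4 + 2976 * x^2 * t * r^3 + 14272 * x^2 * t^2 * r^2 +
        24448 * x^2 * t^3 * r + 608 * x^3 * r^3 + 7808 * x^3 * t * r^2 +
        21472 * x^3 * t^2 * r + 1152 * x^4 * r^2 + 8512 * x^4 * t * r + 1120 * x^5 * r" (is "0 < ?P")
      using xtr by (intro add_pos_nonneg add_nonneg_nonneg mult_pos_pos mult_nonneg_nonneg
          zero_less_power zero_le_power) auto
    moreover have "64 * ((g + 1) ^ 3 * ?E) = - ?P"
      unfolding x_def t_def r_def \<open>m = 2\<close> gap_coeff0_def gap_coeff1_def gap_coeff2_def by algebra
    ultimately show ?thesis by linarith
  qed
  then have "(g + 1)\<^sup>2 * gap_poly m g s (V1 g) < 0"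
    unfolding scaled using gp by (simp add: mult_less_0_iff)
  then show ?thesis by (simp add: mult_less_0_iff)
qed

lemma gap_poly_slope_at_V1_nonpos:
  fixes m g s :: real
  assumes m: "m = 1 \<or> m = 2" and "1 < g" and "V1 g < s" and "s \<le> -1/2"
  shows "2 * gap_coeff2 m g s * V1 g + gap_coeff1 m g s \<le> 0"
proof -
  define x t r where "x = g - 1" and "t = (g + 1) * s + 2" and "r = (g + 1) * (- 2 * s - 1)"
  have xtr: "0 < x" "0 < t" "0 \<le> r"
    unfolding x_def t_def r_def using certificate_variables_nonneg assms(2-4) by auto
  have gp: "0 < g + 1" using \<open>1 < g\<close> by simp
  have scaled: "(g + 1) * (2 * gap_coeff2 m g s * V1 g + gap_coeff1 m g s)
      = - 4 * gap_coeff2 m g s + (g + 1) * gap_coeff1 m g s"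
    (is "_ = ?E")
    using V1_mult_eq[of g] \<open>1 < g\<close> by simp algebra
  have "32 * ((g + 1)\<^sup>2 * ?E) < 0"
    using m
  proof
    assume "m = 1"
    have "0 < 128 * t^5 + 640 * x * t^4 + 1344 * x^2 * t^3 + 1456 * x^3 * t^2 + 800 * x^4 * t +
        176 * x^5 + 16 * t * r^4 + 112 * t^2 * r^3 + 288 * t^3 * r^2 + 320 * t^4 * r +
        16 * x * r^4 + 224 * x * t * r^3 + 864 * x * t^2 * r^2 + 1280 * x * t^3 * r +
        128 * x^2 * r^3 + 944 * x^2 * t * r^2 + 2048 * x^2 * t^2 * r + 384 * x^3 * r^2 +
        1536 * x^3 * t * r + 448 * x^4 * r" (is "0 < ?P")
      using xtr by (intro add_pos_nonneg add_nonneg_nonneg mult_pos_pos mult_nonneg_nonneg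
          zero_less_power zero_le_power) auto
    moreover have "32 * ((g + 1)\<^sup>2 * ?E) = - ?P"
      unfolding x_def t_def r_def \<open>m = 1\<close> gap_coeff1_def gap_coeff2_def by algebra
    ultimately show ?thesis by linarith
  next
    assume "m = 2"
    have "0 < 64 * t^5 + 256 * x * t^4 + 624 * x^2 * t^3 + 928 * x^3 * t^2 + 688 * x^4 * t +
        192 * x^5 + 24 * t * r^4 + 152 * t^2 * r^3 + 336 * t^3 * r^2 + 288 * t^4 * r +
        8 * x * r^4 + 176 * x * t * r^3 + 672 * x * t^2 * r^2 + 832 * x * t^3 * r +
        56 * x^2 * r^3 + 568 * x^2 * t * r^2 + 1224 * x^2 * t^2 * r + 280 * x^3 * r^2 +
        1104 * x^3 * t * r + 424 * x^4 * r" (is "0 < ?P")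
      using xtr by (intro add_pos_nonneg add_nonneg_nonneg mult_pos_pos mult_nonneg_nonneg
          zero_less_power zero_le_power) auto
    moreover have "32 * ((g + 1)\<^sup>2 * ?E) = - ?P"
      unfolding x_def t_def r_def \<open>m = 2\<close> gap_coeff1_def gap_coeff2_def by algebra
    ultimately show ?thesis by linarith
  qed
  then have "(g + 1) * (2 * gap_coeff2 m g s * V1 g + gap_coeff1 m g s) < 0"
    unfolding scaled using gp by (simp add: mult_less_0_iff)
  then show ?thesis using gp by (simp add: mult_less_0_iff)
qed

lemma FV_poly_nonpos:
  fixes m g s :: real
  assumes m: "m = 1 \<or> m = 2" and "1 < g" and "V1 g < s" and "s \<le> -1/2"
  shows "FV_poly m g s \<le> 0"
proof -
  define x t r where "x = g - 1" and "t = (g + 1) * s + 2" and "r = (g + 1) * (- 2 * s - 1)"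
  have xtr: "0 < x" "0 < t" "0 \<le> r"
    unfolding x_def t_def r_def using certificate_variables_nonneg assms(2-4) by auto
  have "16 * ((g + 1)\<^sup>2 * FV_poly m g s) < 0"
    using m
  proof
    assume "m = 1"
    have "0 < 128 * t^4 + 424 * x * t^3 + 508 * x^2 * t^2 + 256 * x^3 * t + 44 * x^4 +
        16 * t * r^3 + 96 * t^2 * r^2 + 192 * t^3 * r + 12 * x * r^3 + 160 * x * t * r^2 +
        484 * x * t^2 * r + 60 * x^2 * r^2 + 384 * x^2 * t * r + 92 * x^3 * r" (is "0 < ?P")
      using xtr by (intro add_pos_nonneg add_nonneg_nonneg mult_pos_pos mult_nonneg_nonneg
          zero_less_power zero_le_power) auto
    moreover have "16 * ((g + 1)\<^sup>2 * FV_poly m g s) = - ?P"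
      unfolding x_def t_def r_def \<open>m = 1\<close> FV_poly_def by algebra
    ultimately show ?thesis by linarith
  next
    assume "m = 2"
    have "0 < 160 * t^4 + 528 * x * t^3 + 624 * x^2 * t^2 + 304 * x^3 * t + 48 * x^4 +
        24 * t * r^3 + 136 * t^2 * r^2 + 256 * t^3 * r + 16 * x * r^3 +
        208 * x * t * r^2 + 616 * x * t^2 * r + 64 * x^2 * r^2 + 456 * x^2 * t * r +
        96 * x^3 * r" (is "0 < ?P")
      using xtr by (intro add_pos_nonneg add_nonneg_nonneg mult_pos_pos mult_nonneg_nonneg
          zero_less_power zero_le_power) auto
    moreover have "16 * ((g + 1)\<^sup>2 * FV_poly m g s) = - ?P"
      unfolding x_def t_def r_def \<open>m = 2\<close> FV_poly_def by algebra
    ultimately show ?thesis by linarith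
  qed
  then show ?thesis by (simp add: mult_less_0_iff)
qed

lemma gap_coeff2_neg:
  fixes m g s :: real
  assumes "0 \<le> m" and "1 < g" and "g \<le> 2" and "-1 < s" and "s < 0"
  shows "gap_coeff2 m g s < 0"
proof -
  have "gap_coeff2 m g s = s * (2 + (2 - g) * s) * (m * (g - 1) + 1)"
    unfolding gap_coeff2_def by (simp add: algebra_simps power2_eq_square)
  moreover have "(2 - g) * (- s) \<le> 1 * 1" using assms by (intro mult_mono) auto
  then have "0 < 2 + (2 - g) * s" by simp
  moreover have "0 < m * (g - 1) + 1" using assms by (intro add_nonneg_pos mult_nonneg_nonneg) auto
  ultimately show ?thesis using \<open>s < 0\<close> by (simp add: mult_neg_pos)
qed

lemma gap_poly_neg:
  fixes m g s V :: real
  assumes "m = 1 \<or> m = 2" and "1 < g" and "g \<le> 2" and "V1 g < s" and "s \<le> -1/2"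
    and "V1 g \<le> V"
  shows "gap_poly m g s V < 0"
proof -
  have "0 \<le> m" "-1 < s" "s < 0" using V1_gt_minus_1[OF assms(2)] assms(1,4,5) by auto
  then have "gap_coeff2 m g s < 0" using gap_coeff2_neg assms(2,3) by blast
  then have "gap_coeff2 m g s * (V + V1 g) \<le> gap_coeff2 m g s * (2 * V1 g)"
    using \<open>V1 g \<le> V\<close> by (intro mult_left_mono_neg) auto
  then have "gap_coeff2 m g s * (V + V1 g) + gap_coeff1 m g s \<le> 0"
    using gap_poly_slope_at_V1_nonpos[OF assms(1,2,4,5)] by (simp add: algebra_simps)
  then have "(V - V1 g) * (gap_coeff2 m g s * (V + V1 g) + gap_coeff1 m g s) \<le> 0"
    using \<open>V1 g \<le> V\<close> by (intro mult_nonneg_nonpos) auto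
  moreover have "gap_poly m g s V
      = gap_poly m g s (V1 g) + (V - V1 g) * (gap_coeff2 m g s * (V + V1 g) + gap_coeff1 m g s)"
    unfolding gap_poly_def by (simp add: algebra_simps power2_eq_square)
  ultimately show ?thesis using gap_poly_at_V1_neg[OF assms(1,2,4,5)] by linarith
qed

lemma discriminant_nonneg:
  fixes g z :: real
  assumes "0 \<le> g" and "0 \<le> z" and "z \<le> zM g"
  shows "0 \<le> 1 - 2 * (g + 2) * z + (g - 2)\<^sup>2 * z\<^sup>2"
proof -
  define a b where "a = (sqrt g + sqrt 2)\<^sup>2" and "b = (sqrt g - sqrt 2)\<^sup>2"
  have sq: "sqrt g * sqrt g = g" "sqrt 2 * sqrt 2 = (2::real)" using \<open>0 \<le> g\<close> by simp_all
  have "0 < sqrt g + sqrt 2" using \<open>0 \<le> g\<close> by (intro add_nonneg_pos) auto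
  then have "0 < a" unfolding a_def by simp
  have "a - b = 4 * (sqrt g * sqrt 2)" unfolding a_def b_def by (simp add: power2_eq_square algebra_simps)
  moreover have "0 \<le> sqrt g * sqrt 2" using \<open>0 \<le> g\<close> by simp
  ultimately have "b \<le> a" by linarith
  have "z * a \<le> 1" using \<open>z \<le> zM g\<close> \<open>0 < a\<close> unfolding zM_def a_def[symmetric] by (simp add: field_simps)
  moreover have "z * b \<le> z * a" using \<open>b \<le> a\<close> \<open>0 \<le> z\<close> by (intro mult_left_mono)
  moreover have "1 - 2 * (g + 2) * z + (g - 2)\<^sup>2 * z\<^sup>2 = (1 - z * a) * (1 - z * b)"
    unfolding a_def b_def using sq by (simp add: power2_eq_square algebra_simps)
  ultimately show ?thesis by simp
qed

lemma V6_quadratic: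
  fixes g z :: real
  assumes "0 \<le> 1 - 2 * (g + 2) * z + (g - 2)\<^sup>2 * z\<^sup>2"
  shows "z * (2 - (g - 2) * V6 g z) = - V6 g z * (1 + V6 g z)"
proof -
  have "(ww g z)\<^sup>2 = 1 - 2 * (g + 2) * z + (g - 2)\<^sup>2 * z\<^sup>2"
    unfolding ww_def using assms by simp
  then show ?thesis unfolding V6_def by (simp add: field_simps power2_eq_square)
qed

lemma V6_le_minus_half:
  fixes g z :: real
  assumes "0 \<le> 1 - 2 * (g + 2) * z + (g - 2)\<^sup>2 * z\<^sup>2" and "g \<le> 2" and "0 \<le> z"
  shows "V6 g z \<le> -1/2"
proof -
  have "(g - 2) * z \<le> 0" using assms(2,3) by (simp add: mult_nonpos_nonneg)
  moreover have "0 \<le> ww g z" unfolding ww_def using assms(1) by simp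
  ultimately show ?thesis unfolding V6_def by simp
qed

lemma Bk_has_real_derivative:
  assumes "0 < - kk g z * V"
  shows "(Bk g z has_real_derivative - kk g z / (2 * Bk g z V)) (at V)"
proof -
  have "((\<lambda>V. sqrt (- kk g z * V)) has_real_derivative inverse (sqrt (- kk g z * V)) / 2 * (- kk g z)) (at V)"
    using assms by (intro DERIV_chain2[OF DERIV_real_sqrt]) (auto intro!: derivative_eq_intros)
  then show ?thesis unfolding Bk_def[abs_def] by (simp add: field_simps)
qed

lemma solves_ODE_on_subset:
  "solves_ODE_on m g z C S \<Longrightarrow> T \<subseteq> S \<Longrightarrow> solves_ODE_on m g z C T"
  unfolding solves_ODE_on_def by (meson DERIV_subset subsetD)

lemma FF_times_shift:
  assumes "1 + V \<noteq> 0"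
  shows "(1 + V) * FF m g z V C = C * (C\<^sup>2 * (1 + V + real m * z) - a1 m g * (1 + V) ^ 3
           + a2 m g z * (1 + V)\<^sup>2 - a3 m g z * (1 + V))"
  using assms unfolding FF_def by (simp add: field_simps power2_eq_square power3_eq_cube)

text \<open>On the barrier \<open>B' = -k/(2 C)\<close>, so \<open>2 C F + k G = 2 C G (F/G - B')\<close>.\<close>

lemma GG_on_barrier:
  assumes hz: "z * (2 - (g - 2) * s) = - s * (1 + s)" and hk: "k * s = - (1 + s)\<^sup>2"
    and hC: "C\<^sup>2 = - k * V"
  shows "GG m g z V C * s * (2 - (g - 2) * s)
    = - V * (V - s) * (s * (2 - (g - 2) * s) * V - (2 - (g - 2) * s)
                       + real m * (1 + s) * (g * s - 2 * (1 + s)\<^sup>2))"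
  using hz hk hC unfolding GG_def lam_def by algebra

lemma slope_gap_on_barrier:
  assumes hz: "z * (2 - (g - 2) * s) = - s * (1 + s)" and hk: "k * s = - (1 + s)\<^sup>2"
    and hC: "C\<^sup>2 = - k * V" and V: "1 + V \<noteq> 0"
  shows "(1 + V) * (2 * C * FF m g z V C + k * GG m g z V C) * s * (2 - (g - 2) * s)
    = - k * V * (s - V) * gap_poly (real m) g s V"
proof -
  have "(1 + V) * (2 * C * FF m g z V C + k * GG m g z V C)
      = 2 * C * ((1 + V) * FF m g z V C) + (1 + V) * k * GG m g z V C"
    by (simp add: algebra_simps)
  also have "\<dots> = 2 * C * (C * (C\<^sup>2 * (1 + V + real m * z) - a1 m g * (1 + V) ^ 3
           + a2 m g z * (1 + V)\<^sup>2 - a3 m g z * (1 + V))) + (1 + V) * k * GG m g z V C"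
    unfolding FF_times_shift[OF V] ..
  finally show ?thesis
    using hz hk hC
    unfolding GG_def lam_def a1_def a2_def a3_def gap_poly_def gap_coeff0_def gap_coeff1_def
      gap_coeff2_def
    by algebra
qed

definition GG_C :: "nat \<Rightarrow> real \<Rightarrow> real \<Rightarrow> real \<Rightarrow> real" where
  "GG_C m z V C = 2 * C * ((real m + 1) * V + 2 * real m * z)"

definition GG_V :: "nat \<Rightarrow> real \<Rightarrow> real \<Rightarrow> real \<Rightarrow> real \<Rightarrow> real" where
  "GG_V m g z V C = C\<^sup>2 * (real m + 1)
     - ((1 + V) * (lam m g z + V) + V * (lam m g z + V) + V * (1 + V))"

definition FF_C :: "nat \<Rightarrow> real \<Rightarrow> real \<Rightarrow> real \<Rightarrow> real \<Rightarrow> real" where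
  "FF_C m g z V C = 3 * C\<^sup>2 * (1 + real m * z / (1 + V))
     - a1 m g * (1 + V)\<^sup>2 + a2 m g z * (1 + V) - a3 m g z"

definition FF_V :: "nat \<Rightarrow> real \<Rightarrow> real \<Rightarrow> real \<Rightarrow> real \<Rightarrow> real" where
  "FF_V m g z V C = C * (- C\<^sup>2 * real m * z / (1 + V)\<^sup>2 - 2 * a1 m g * (1 + V) + a2 m g z)"

lemma GG_has_derivative_C: "((\<lambda>C. GG m g z V C) has_real_derivative GG_C m z V C) (at C)"
  unfolding GG_def GG_C_def by (auto intro!: derivative_eq_intros simp: algebra_simps)

lemma GG_has_derivative_V: "((\<lambda>V. GG m g z V C) has_real_derivative GG_V m g z V C) (at V)"
  unfolding GG_def GG_V_def by (auto intro!: derivative_eq_intros simp: algebra_simps)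

lemma FF_has_derivative_C: "((\<lambda>C. FF m g z V C) has_real_derivative FF_C m g z V C) (at C)"
proof -
  define \<alpha> \<beta> where "\<alpha> = 1 + real m * z / (1 + V)"
    and "\<beta> = - a1 m g * (1 + V)\<^sup>2 + a2 m g z * (1 + V) - a3 m g z"
  have "(\<lambda>C. FF m g z V C) = (\<lambda>C. C ^ 3 * \<alpha> + C * \<beta>)"
    unfolding FF_def \<alpha>_def \<beta>_def by (simp add: fun_eq_iff algebra_simps power2_eq_square power3_eq_cube)
  moreover have "((\<lambda>C. C ^ 3 * \<alpha> + C * \<beta>) has_real_derivative 3 * C\<^sup>2 * \<alpha> + \<beta>) (at C)"
    by (auto intro!: derivative_eq_intros simp: power2_eq_square)
  ultimately show ?thesis unfolding FF_C_def \<alpha>_def \<beta>_def by (simp add: algebra_simps)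
qed

lemma FF_has_derivative_V:
  assumes "1 + V \<noteq> 0"
  shows "((\<lambda>V. FF m g z V C) has_real_derivative FF_V m g z V C) (at V)"
  unfolding FF_def FF_V_def using assms
  by (auto intro!: derivative_eq_intros simp: field_simps power2_eq_square)

lemma is_c1_iff:
  assumes "1 + V6 g z \<noteq> 0"
  shows "is_c1 m g z c \<longleftrightarrow> c < 0 \<and>
    - GG_C m z (V6 g z) (C6 g z) * c\<^sup>2
      + (FF_C m g z (V6 g z) (C6 g z) - GG_V m g z (V6 g z) (C6 g z)) * c
      + FF_V m g z (V6 g z) (C6 g z) = 0"
  unfolding is_c1_def Let_def
  using DERIV_imp_deriv[OF GG_has_derivative_C] DERIV_imp_deriv[OF GG_has_derivative_V]
    DERIV_imp_deriv[OF FF_has_derivative_C] DERIV_imp_deriv[OF FF_has_derivative_V[OF assms]]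
  by simp

lemma GG_C_at_P6:
  assumes hz: "z * (2 - (g - 2) * s) = - s * (1 + s)"
  shows "- GG_C m z s (1 + s) * (2 - (g - 2) * s)
    = 2 * s * (1 + s) * ((real m + 1) * g * s - 2 * (1 + s))"
  using hz unfolding GG_C_def by algebra

lemma FF_V_at_P6:
  assumes hz: "z * (2 - (g - 2) * s) = - s * (1 + s)" and "1 + s \<noteq> 0"
  shows "FF_V m g z s (1 + s) * (2 - (g - 2) * s) = (1 + s) * FV_poly (real m) g s"
proof -
  have "FF_V m g z s (1 + s) = (1 + s) * (- real m * z - 2 * a1 m g * (1 + s) + a2 m g z)"
    unfolding FF_V_def using \<open>1 + s \<noteq> 0\<close> by (simp add: field_simps)
  then show ?thesis using hz unfolding a1_def a2_def FV_poly_def by algebra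
qed

text \<open>\<open>t\<close> is the barrier slope \<open>B'(V\<^sub>6) = -k/(2(1 + V\<^sub>6))\<close>.\<close>

lemma char_quadratic_at_barrier_slope:
  assumes hz: "z * (2 - (g - 2) * s) = - s * (1 + s)" and "1 + s \<noteq> 0" and ht: "2 * s * t = 1 + s"
  shows "(- GG_C m z s (1 + s) * t\<^sup>2 + (FF_C m g z s (1 + s) - GG_V m g z s (1 + s)) * t
      + FF_V m g z s (1 + s)) * (4 * s\<^sup>2 * (2 - (g - 2) * s))
    = - 2 * s * gap_poly (real m) g s s"
proof -
  have "FF_V m g z s (1 + s) = (1 + s) * (- real m * z - 2 * a1 m g * (1 + s) + a2 m g z)"
    unfolding FF_V_def using \<open>1 + s \<noteq> 0\<close> by (simp add: field_simps)
  moreover have "FF_C m g z s (1 + s)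
      = 3 * (1 + s)\<^sup>2 + 3 * real m * z * (1 + s) - a1 m g * (1 + s)\<^sup>2 + a2 m g z * (1 + s) - a3 m g z"
    unfolding FF_C_def using \<open>1 + s \<noteq> 0\<close> by (simp add: field_simps power2_eq_square)
  ultimately show ?thesis
    using hz ht unfolding GG_C_def GG_V_def lam_def a1_def a2_def a3_def gap_poly_def
      gap_coeff0_def gap_coeff1_def gap_coeff2_def
    by algebra
qed

locale barrier_setting =
  fixes m :: nat and g z :: real
  assumes m_cases: "m \<in> {1, 2}" and g_gt_1: "1 < g" and g_le_2: "g \<le> 2"
    and z_pos: "0 < z" and z_le_zM: "z \<le> zM g" and V1_lt_V6: "V1 g < V6 g z"
begin

lemma real_m_cases: "real m = 1 \<or> real m = 2"
  using m_cases by auto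

lemma V6_relation: "z * (2 - (g - 2) * V6 g z) = - V6 g z * (1 + V6 g z)"
  using V6_quadratic discriminant_nonneg g_gt_1 z_pos z_le_zM by simp

lemma V6_le: "V6 g z \<le> -1/2"
  using V6_le_minus_half discriminant_nonneg g_gt_1 g_le_2 z_pos z_le_zM by simp

lemma one_plus_V6_pos: "0 < 1 + V6 g z"
  using V1_gt_minus_1[OF g_gt_1] V1_lt_V6 by linarith

lemma V6_factor_pos: "0 < 2 - (g - 2) * V6 g z"
proof -
  have "(2 - g) * (- V6 g z) \<le> 1 * 1"
    using g_gt_1 g_le_2 V6_le one_plus_V6_pos by (intro mult_mono) auto
  then show ?thesis by (simp add: algebra_simps)
qed

lemma kk_mult_V6: "kk g z * V6 g z = - (1 + V6 g z)\<^sup>2"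
  unfolding kk_def using V6_le by simp

lemma kk_pos: "0 < kk g z"
  unfolding kk_def using V6_le one_plus_V6_pos by (simp add: divide_pos_neg)

lemma Bk_sq: "V \<le> 0 \<Longrightarrow> (Bk g z V)\<^sup>2 = - kk g z * V"
  unfolding Bk_def using kk_pos by (simp add: mult_le_0_iff)

lemma Bk_pos: "V < 0 \<Longrightarrow> 0 < Bk g z V"
  unfolding Bk_def using kk_pos by (simp add: mult_pos_neg)

lemma GG_on_barrier_neg:
  assumes "V1 g \<le> V" and "V < V6 g z"
  shows "GG m g z V (Bk g z V) < 0"
proof -
  define s D where "s = V6 g z" and "D = 2 - (g - 2) * s"
  have s: "s \<le> -1/2" "0 < 1 + s" "0 < D" "V < s"
    using V6_le one_plus_V6_pos V6_factor_pos assms(2) unfolding s_def D_def by auto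
  have V: "-1 < V" "V < 0" using V1_gt_minus_1[OF g_gt_1] assms s by linarith+
  have "(-s) * (-V) < 1 * 1" using s V by (intro mult_strict_mono) auto
  then have "D * (s * V - 1) < 0" using s by (simp add: mult_pos_neg)
  moreover have "g * s < 0" using s g_gt_1 by (simp add: mult_pos_neg)
  then have "g * s - 2 * (1 + s)\<^sup>2 \<le> 0" using zero_le_power2[of "1 + s"] by linarith
  then have "real m * (1 + s) * (g * s - 2 * (1 + s)\<^sup>2) \<le> 0"
    using s by (intro mult_nonneg_nonpos) auto
  ultimately have "s * D * V - D + real m * (1 + s) * (g * s - 2 * (1 + s)\<^sup>2) < 0"
    by (simp add: algebra_simps)
  then have "0 < - V * (V - s) * (s * D * V - D + real m * (1 + s) * (g * s - 2 * (1 + s)\<^sup>2))"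
    using s V by (simp add: mult_pos_neg mult_neg_neg)
  also have "\<dots> = GG m g z V (Bk g z V) * (s * D)"
    using GG_on_barrier[OF V6_relation kk_mult_V6 Bk_sq] V unfolding s_def D_def
    by (simp add: mult.assoc)
  finally show ?thesis using s by (simp add: zero_less_mult_iff mult_neg_pos)
qed

lemma field_flatter_than_barrier:
  assumes "V1 g \<le> V" and "V < V6 g z"
  shows "FF m g z V (Bk g z V) / GG m g z V (Bk g z V) < - kk g z / (2 * Bk g z V)"
proof -
  define s D B where "s = V6 g z" and "D = 2 - (g - 2) * s" and "B = Bk g z V"
  define F G where "F = FF m g z V B" and "G = GG m g z V B"
  define N where "N = 2 * B * F + kk g z * G"
  have s: "V1 g < s" "s \<le> -1/2" "0 < 1 + s" "0 < D" "V < s"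
    using V1_lt_V6 V6_le one_plus_V6_pos V6_factor_pos assms(2) unfolding s_def D_def by auto
  have V: "0 < 1 + V" "V < 0" using V1_gt_minus_1[OF g_gt_1] assms s by linarith+
  have "G < 0" using GG_on_barrier_neg[OF assms] unfolding G_def B_def .
  have "0 < B" using Bk_pos V unfolding B_def by simp
  have "kk g z * V < 0" using kk_pos V by (simp add: mult_pos_neg)
  then have "0 < (- kk g z * V) * (s - V)" using mult_pos_pos[of "- kk g z * V" "s - V"] s by simp
  then have "(- kk g z * V * (s - V)) * gap_poly (real m) g s V < 0"
    using gap_poly_neg[OF real_m_cases g_gt_1 g_le_2 s(1,2) assms(1)] by (rule mult_pos_neg)
  also have "- kk g z * V * (s - V) * gap_poly (real m) g s V = N * ((1 + V) * (s * D))"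
    using slope_gap_on_barrier[OF V6_relation kk_mult_V6 Bk_sq, of V m] V
    unfolding s_def D_def B_def N_def F_def G_def by (simp only: ac_simps)
  finally have "N * ((1 + V) * (s * D)) < 0" .
  moreover have "s * D < 0" using s by (simp add: mult_neg_pos)
  then have "(1 + V) * (s * D) < 0" using V by (simp add: mult_pos_neg)
  ultimately have "0 < N" by (simp add: mult_less_0_iff)
  then have "N / (2 * B * G) < 0" using \<open>0 < B\<close> \<open>G < 0\<close> by (simp add: divide_pos_neg mult_pos_neg)
  moreover have "N / (2 * B * G) = F / G + kk g z / (2 * B)"
    unfolding N_def using \<open>0 < B\<close> \<open>G < 0\<close> by (simp add: field_simps)
  ultimately show ?thesis unfolding F_def G_def B_def by simp
qed

lemma solution_above_barrier:
  assumes sol: "solves_ODE_on m g z C {V1 g..Vb}" and "Vb < V6 g z" and "Bk g z Vb < C Vb"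
  shows "\<forall>V\<in>{V1 g..Vb}. Bk g z V < C V"
proof -
  have derC: "(C has_real_derivative FF m g z V (C V) / GG m g z V (C V)) (at V within {V1 g..Vb})"
    if "V \<in> {V1 g..Vb}" for V
    using sol that unfolding solves_ODE_on_def by blast
  have "continuous_on {V1 g..Vb} C"
    unfolding continuous_on_eq_continuous_within using derC DERIV_continuous by blast
  then have cont: "continuous_on {V1 g..Vb} (\<lambda>V. C V - Bk g z V)"
    unfolding Bk_def by (intro continuous_intros)
  have down: "\<exists>f'<0. ((\<lambda>V. C V - Bk g z V) has_real_derivative f') (at V within {V1 g..Vb})"
    if V: "V \<in> {V1 g..Vb}" and touch: "C V - Bk g z V = 0" for V
  proof -
    define f' where "f' = FF m g z V (C V) / GG m g z V (C V) - - kk g z / (2 * Bk g z V)"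
    have V': "V1 g \<le> V" "V < V6 g z" using V \<open>Vb < V6 g z\<close> by auto
    then have "V < 0" using V6_le by linarith
    then have "(Bk g z has_real_derivative - kk g z / (2 * Bk g z V)) (at V within {V1 g..Vb})"
      using kk_pos by (intro has_field_derivative_at_within[OF Bk_has_real_derivative])
        (simp add: mult_pos_neg)
    from DERIV_diff[OF derC[OF V] this]
    have "((\<lambda>V. C V - Bk g z V) has_real_derivative f') (at V within {V1 g..Vb})"
      unfolding f'_def .
    moreover have "C V = Bk g z V" using touch by simp
    then have "f' < 0" using field_flatter_than_barrier[OF V'] unfolding f'_def by simp
    ultimately show ?thesis by blast
  qed
  have "\<forall>V\<in>{V1 g..Vb}. 0 < C V - Bk g z V"
    using pos_on_Icc_if_downcrossing_zeros[OF cont _ down] assms(3) by simp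
  then show ?thesis by simp
qed

lemma c1_lt_barrier_slope:
  assumes "is_c1 m g z c"
  shows "2 * (1 + V6 g z) * c + kk g z < 0"
proof -
  define s D t where "s = V6 g z" and "D = 2 - (g - 2) * s" and "t = (1 + s) / (2 * s)"
  define a b c0 where "a = - GG_C m z s (1 + s)"
    and "b = FF_C m g z s (1 + s) - GG_V m g z s (1 + s)" and "c0 = FF_V m g z s (1 + s)"
  have s: "V1 g < s" "s < 0" "0 < 1 + s" "0 < D"
    using V1_lt_V6 V6_le one_plus_V6_pos V6_factor_pos unfolding s_def D_def by auto
  have hz: "z * (2 - (g - 2) * s) = - s * (1 + s)" using V6_relation unfolding s_def .
  have "c < 0" and root: "a * c\<^sup>2 + b * c + c0 = 0"
    using assms is_c1_iff[of g z m c] s unfolding a_def b_def c0_def s_def C6_def by auto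
  have "(real m + 1) * g * s < 0" using s g_gt_1 by (simp add: mult_pos_neg)
  then have "0 < 2 * s * (1 + s) * ((real m + 1) * g * s - 2 * (1 + s))"
    using s by (simp add: mult_neg_neg mult_pos_neg)
  also have "\<dots> = a * D"
    using GG_C_at_P6[OF hz, of m] unfolding a_def D_def by simp
  finally have "0 < a" using s by (simp add: zero_less_mult_iff)
  have "c0 * D = (1 + s) * FV_poly (real m) g s"
    using FF_V_at_P6[OF hz, of m] s unfolding c0_def D_def by simp
  also have "\<dots> \<le> 0"
    using FV_poly_nonpos[OF real_m_cases g_gt_1 s(1)] V6_le s unfolding s_def
    by (simp add: mult_nonneg_nonpos)
  finally have "c0 \<le> 0" using s by (simp add: mult_le_0_iff)
  have "t < 0" unfolding t_def using s by (simp add: divide_pos_neg)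
  have "gap_poly (real m) g s s < 0"
    using gap_poly_neg[OF real_m_cases g_gt_1 g_le_2 s(1)] V6_le s unfolding s_def by simp
  have "1 + s \<noteq> 0" and "2 * s * t = 1 + s" unfolding t_def using s by simp_all
  then have "(a * t\<^sup>2 + b * t + c0) * (4 * s\<^sup>2 * D) = - 2 * s * gap_poly (real m) g s s"
    unfolding a_def b_def c0_def D_def by (rule char_quadratic_at_barrier_slope[OF hz])
  also have "\<dots> < 0" using \<open>gap_poly (real m) g s s < 0\<close> s by (intro mult_pos_neg) auto
  finally have "(a * t\<^sup>2 + b * t + c0) * (4 * s\<^sup>2 * D) < 0" .
  then have "a * t\<^sup>2 + b * t + c0 < 0" using s by (simp add: mult_less_0_iff)
  then have "c < t" using neg_root_lt \<open>0 < a\<close> \<open>c0 \<le> 0\<close> \<open>c < 0\<close> \<open>t < 0\<close> root by blast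
  moreover have "2 * (1 + s) * t = - kk g z"
    unfolding t_def kk_def s_def[symmetric] using s by (simp add: field_simps power2_eq_square)
  ultimately show ?thesis using s unfolding s_def by (smt (verit) mult_strict_left_mono)
qed

lemma P6_solution_above_barrier:
  assumes P6: "is_P6_solution m g z C" and "V1 g \<le> V" and "V < V6 g z"
  shows "Bk g z V < C V"
proof -
  define s S where "s = V6 g z" and "S = {V1 g..s}"
  define h where "h W = C W * C W + kk g z * W" for W
  have C_pos: "0 < C W" if "W \<in> S" for W
    using P6 that unfolding is_P6_solution_def S_def s_def by auto
  have "C s = 1 + s" using P6 unfolding is_P6_solution_def C6_def s_def by simp
  obtain c where "is_c1 m g z c" and dC: "(C has_real_derivative c) (at s within S)"
    using P6 unfolding is_P6_solution_def S_def s_def by blast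
  have "(h has_real_derivative c * C s + c * C s + kk g z * 1) (at s within S)"
    unfolding h_def[abs_def] using DERIV_add[OF DERIV_mult[OF dC dC] DERIV_cmult[OF DERIV_ident]]
    by simp
  moreover have "c * C s + c * C s + kk g z * 1 < 0"
    using c1_lt_barrier_slope[OF \<open>is_c1 m g z c\<close>] \<open>C s = 1 + s\<close> unfolding s_def
    by (simp add: algebra_simps)
  ultimately obtain d where "0 < d" and dec: "\<And>e. 0 < e \<Longrightarrow> s - e \<in> S \<Longrightarrow> e < d \<Longrightarrow> h s < h (s - e)"
    using has_real_derivative_neg_dec_left by metis
  have "h s = 0" unfolding h_def \<open>C s = 1 + s\<close> using kk_mult_V6 unfolding s_def
    by (simp add: algebra_simps power2_eq_square)
  define Vb where "Vb = max V (s - d / 2)"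
  have Vb: "V \<le> Vb" "V1 g \<le> Vb" "Vb < s" "s - Vb < d"
    using assms(2,3) \<open>0 < d\<close> unfolding Vb_def s_def by auto
  then have "0 < h Vb" using dec[of "s - Vb"] \<open>h s = 0\<close> unfolding S_def by auto
  then have "- kk g z * Vb < (C Vb)\<^sup>2" unfolding h_def by (simp add: power2_eq_square)
  then have "Bk g z Vb < C Vb"
    unfolding Bk_def using C_pos[of Vb] Vb real_less_lsqrt by (simp add: S_def)
  moreover have "solves_ODE_on m g z C {V1 g..Vb}"
    using P6 Vb unfolding is_P6_solution_def s_def by (auto elim: solves_ODE_on_subset)
  ultimately show ?thesis
    using solution_above_barrier Vb unfolding s_def by (meson atLeastAtMost_iff assms(2))
qed

end

lemma zm_pos: "1 < g \<Longrightarrow> 0 < zm g"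
  unfolding zm_def by simp

lemma zg_pos:
  fixes g :: real
  assumes "1 < g"
  shows "0 < zg m g"
proof -
  have root_gt: "b < sqrt (b\<^sup>2 + e)" if "0 < b" "0 < e" for b e :: real
    using real_sqrt_less_mono[of "b\<^sup>2" "b\<^sup>2 + e"] that by simp
  have "0 < 2 * g\<^sup>2 - g + 1" using assms by (simp add: power2_eq_square) (smt (verit) mult_le_cancel_left1)
  moreover have "0 < 4 * g * (g - 1) + 8 / 3" using assms by (simp add: add_pos_pos)
  ultimately show ?thesis
    unfolding zg_def using assms root_gt by (simp add: divide_pos_pos)
qed

theorem mainTheorem7:
  fixes m :: nat and g :: real
  assumes "m \<in> {1, 2}" and "1 < g" and "g \<le> 2"
  shows "(\<forall>z \<in> {zm g..zM g}. \<forall>Vb Cb. \<forall>C :: real \<Rightarrow> real.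
            V1 g < Vb \<and> Vb < V6 g z \<and> Cb > Bk g z Vb \<and>
            solves_ODE_on m g z C {V1 g..Vb} \<and> C Vb = Cb
            \<longrightarrow> (\<forall>V \<in> {V1 g..Vb}. C V > Bk g z V))
       \<and> (\<forall>z \<in> {zg m g..zM g}. \<forall>C :: real \<Rightarrow> real.
            is_P6_solution m g z C \<longrightarrow> (\<forall>V \<in> {V1 g..<V6 g z}. C V > Bk g z V))"
proof (intro conjI ballI allI impI)
  fix z Vb Cb and C :: "real \<Rightarrow> real" and V
  assume z: "z \<in> {zm g..zM g}"
    and H: "V1 g < Vb \<and> Vb < V6 g z \<and> Cb > Bk g z Vb \<and> solves_ODE_on m g z C {V1 g..Vb} \<and> C Vb = Cb"
    and V: "V \<in> {V1 g..Vb}"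
  interpret barrier_setting m g z
    using assms z H zm_pos[OF assms(2)] by unfold_locales auto
  show "C V > Bk g z V" using solution_above_barrier H V by auto
next
  fix z and C :: "real \<Rightarrow> real" and V
  assume z: "z \<in> {zg m g..zM g}" and P6: "is_P6_solution m g z C" and V: "V \<in> {V1 g..<V6 g z}"
  interpret barrier_setting m g z
    using assms z V zg_pos[OF assms(2), of m] by unfold_locales auto
  show "C V > Bk g z V" using P6_solution_above_barrier P6 V by auto
qed

end
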